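(* Let $(X,\mathbb{A},d)$ be a complete $C^*$-algebra valued metric space, where $\mathbb{A}$ is a unital $C^*$-algebra, and let $T:X\to X$ be a $C^*$-algebra valued Ćirić-type2 contractive mapping, i.e. for every $x,y\in X$ there is $q(x,y)\in\acute{\mathbb{A}}_+$ with $0\le\|q(x,y)\|<1$, and there is a mapping $\delta:X\times X\to\mathbb{A}_+$, such that $$d(T^n x,T^n y)\preceq q(x,y)^n\,\delta(x,y)\quad\text{for all }x,y\in X,\ n\in\mathbb{N}.$$ Then $T$ is orbitally continuous on $X$ if and only if $T$ has a unique fixed point in $X$.
   Context: $\mathbb{A}$ denotes a unital $C^*$-algebra with unit $I$ and zero $\theta$. An element $a\in\mathbb{A}$ is positive, written $a\succeq\theta$, if $a^*=a$ and its spectrum is contained in $[0,\infty)$; $\mathbb{A}_+$ is the set of positive elements, and $a\succeq b$ means $a-b\succeq\theta$. $\acute{\mathbb{A}}_+$ denotes the set of positive elements of $\mathbb{A}$ that commute with every element of $\mathbb{A}$. A $C^*$-algebra valued metric space $(X,\mathbb{A},d)$ is a nonempty set $X$ with $d:X\times X\to\mathbb{A}$ such that for all $x,y,z\in X$: $d(x,y)\succeq\theta$, with $d(x,y)=\theta$ iff $x=y$; $d(x,y)=d(y,x)$; $d(x,y)\preceq d(x,z)+d(z,y)$. A sequence $\{x_n\}$ converges to $x$ if $\|d(x_n,x)\|\to0$, and is Cauchy if $\|d(x_n,x_m)\|\to0$ as $n,m\to\infty$; the space is complete if every Cauchy sequence converges to a point of $X$. A self-map $T$ of $X$ is orbitally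 continuous at $u\in X$ if for every $x\in X$ and every increasing sequence of positive integers $\{n_i\}$, $\|d(T^{n_i}x,u)\|\to0$ implies $\|d(T^{n_i+1}x,Tu)\|\to0$ as $i\to\infty$; $T$ is orbitally continuous on $X$ if it is orbitally continuous at every $u\in X$. *)

theory Defs
  imports "HOL-Analysis.Analysis"
begin

class cstar_algebra = real_normed_algebra_1 + banach +
  fixes scaleC :: "complex \<Rightarrow> 'a \<Rightarrow> 'a"
    and cstar :: "'a \<Rightarrow> 'a"
  assumes scaleC_add_right: "scaleC c (a + b) = scaleC c a + scaleC c b"
    and scaleC_add_left: "scaleC (c + e) a = scaleC c a + scaleC e a"
    and scaleC_scaleC: "scaleC c (scaleC e a) = scaleC (c * e) a"
    and scaleC_one: "scaleC 1 a = a"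
    and scaleR_scaleC: "scaleR r a = scaleC (complex_of_real r) a"
    and norm_scaleC: "norm (scaleC c a) = cmod c * norm a"
    and mult_scaleC_left: "scaleC c a * b = scaleC c (a * b)"
    and mult_scaleC_right: "a * scaleC c b = scaleC c (a * b)"
    and cstar_cstar: "cstar (cstar a) = a"
    and cstar_add: "cstar (a + b) = cstar a + cstar b"
    and cstar_mult: "cstar (a * b) = cstar b * cstar a"
    and cstar_scaleC: "cstar (scaleC c a) = scaleC (cnj c) (cstar a)"
    and cstar_identity: "norm (cstar a * a) = norm a * norm a"

definition spectrum :: "'a::cstar_algebra \<Rightarrow> complex set" where
  "spectrum a = {z. \<not> (\<exists>b. b * (a - scaleC z 1) = 1 \<and> (a - scaleC z 1) * b = 1)}"

definition positive :: "'a::cstar_algebra \<Rightarrow> bool" where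
  "positive a \<longleftrightarrow> cstar a = a \<and> spectrum a \<subseteq> {z. Im z = 0 \<and> 0 \<le> Re z}"

definition cleq :: "'a::cstar_algebra \<Rightarrow> 'a \<Rightarrow> bool" where
  "cleq a b \<longleftrightarrow> positive (b - a)"

definition central_positive :: "'a::cstar_algebra set" where
  "central_positive = {a. positive a \<and> (\<forall>b. a * b = b * a)}"

definition cstar_metric :: "('x \<Rightarrow> 'x \<Rightarrow> 'a::cstar_algebra) \<Rightarrow> bool" where
  "cstar_metric d \<longleftrightarrow> (\<forall>x y z. positive (d x y) \<and> (d x y = 0 \<longleftrightarrow> x = y)
      \<and> d x y = d y x \<and> cleq (d x y) (d x z + d z y))"

definition cconverges :: "('x \<Rightarrow> 'x \<Rightarrow> 'a::cstar_algebra) \<Rightarrow> (nat \<Rightarrow> 'x) \<Rightarrow> 'x \<Rightarrow> bool" where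
  "cconverges d s x \<longleftrightarrow> (\<lambda>n. norm (d (s n) x)) \<longlonglongrightarrow> 0"

definition ccauchy :: "('x \<Rightarrow> 'x \<Rightarrow> 'a::cstar_algebra) \<Rightarrow> (nat \<Rightarrow> 'x) \<Rightarrow> bool" where
  "ccauchy d s \<longleftrightarrow> (\<forall>e>0. \<exists>N. \<forall>m\<ge>N. \<forall>n\<ge>N. norm (d (s n) (s m)) < e)"

definition ccomplete :: "('x \<Rightarrow> 'x \<Rightarrow> 'a::cstar_algebra) \<Rightarrow> bool" where
  "ccomplete d \<longleftrightarrow> (\<forall>s. ccauchy d s \<longrightarrow> (\<exists>x. cconverges d s x))"

definition orbitally_continuous_at ::
  "('x \<Rightarrow> 'x \<Rightarrow> 'a::cstar_algebra) \<Rightarrow> ('x \<Rightarrow> 'x) \<Rightarrow> 'x \<Rightarrow> bool" where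
  "orbitally_continuous_at d T u \<longleftrightarrow>
     (\<forall>x (ni::nat \<Rightarrow> nat). strict_mono ni \<longrightarrow>
        (\<lambda>i. norm (d ((T ^^ ni i) x) u)) \<longlonglongrightarrow> 0 \<longrightarrow>
        (\<lambda>i. norm (d ((T ^^ (ni i + 1)) x) (T u))) \<longlonglongrightarrow> 0)"

definition orbitally_continuous ::
  "('x \<Rightarrow> 'x \<Rightarrow> 'a::cstar_algebra) \<Rightarrow> ('x \<Rightarrow> 'x) \<Rightarrow> bool" where
  "orbitally_continuous d T \<longleftrightarrow> (\<forall>u. orbitally_continuous_at d T u)"

definition ciric_type2 :: "('x \<Rightarrow> 'x \<Rightarrow> 'a::cstar_algebra) \<Rightarrow> ('x \<Rightarrow> 'x) \<Rightarrow> bool" where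
  "ciric_type2 d T \<longleftrightarrow>
     (\<exists>(q::'x \<Rightarrow> 'x \<Rightarrow> 'a) (\<delta>::'x \<Rightarrow> 'x \<Rightarrow> 'a).
        (\<forall>x y. q x y \<in> central_positive \<and> norm (q x y) < 1) \<and>
        (\<forall>x y. positive (\<delta> x y)) \<and>
        (\<forall>x y n. n \<ge> 1 \<longrightarrow> cleq (d ((T ^^ n) x) ((T ^^ n) y)) (q x y ^ n * \<delta> x y)))"

end

theory Submission
  imports Defs
begin

text \<open>
  Taking norms in the contraction condition gives
  \<open>\<parallel>d(T\<^sup>n x, T\<^sup>n y)\<parallel> \<le> \<parallel>q(x,y)\<parallel>\<^sup>n \<parallel>\<delta>(x,y)\<parallel>\<close>, once one knows that the norm is monotone
  on positive elements. That monotonicity is the C*-algebraic core: for self-adjoint \<open>h\<close>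
  the norm equals the spectral radius, because \<open>\<parallel>h\<^sup>2\<^sup>k\<parallel> = \<parallel>h\<parallel>\<^sup>2\<^sup>k\<close> and because
  \<open>x\<^sup>n \<longrightarrow> 0\<close> as soon as \<open>1 - \<mu>x\<close> is invertible for all \<open>|\<mu>| \<le> 1\<close>.

  With real distances the argument is that of a metric space. Consecutive points of an
  orbit are at distance at most \<open>C \<parallel>q(x,Tx)\<parallel>\<^sup>n\<close>, so orbits are Cauchy and converge by
  completeness; orbital continuity makes the limit a fixed point. Conversely, a fixed point
  \<open>u\<close> attracts every orbit, since \<open>d(T\<^sup>n x, u) = d(T\<^sup>n x, T\<^sup>n u)\<close>: this yields uniqueness
  of the fixed point and orbital continuity.
\<close>

context cstar_algebra begin

lemma scaleC_zero_left [simp]: "scaleC 0 a = 0"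
  using scaleC_add_left[of 0 0 a] by simp

lemma scaleC_zero_right [simp]: "scaleC c 0 = 0"
  using scaleC_add_right[of c 0 0] by simp

lemma scaleC_minus_left: "scaleC (- c) a = - scaleC c a"
  using scaleC_add_left[of c "-c" a] by (simp add: minus_unique)

lemma scaleC_minus_right: "scaleC c (- a) = - scaleC c a"
  using scaleC_add_right[of c a "-a"] by (simp add: minus_unique)

lemma scaleC_diff_left: "scaleC (c - e) a = scaleC c a - scaleC e a"
  using scaleC_add_left[of c "-e" a] by (simp add: scaleC_minus_left)

lemma scaleC_diff_right: "scaleC c (a - b) = scaleC c a - scaleC c b"
  using scaleC_add_right[of c a "-b"] by (simp add: scaleC_minus_right)

lemma scaleC_sum_left: "scaleC (sum f A) a = (\<Sum>i\<in>A. scaleC (f i) a)"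
  by (induct A rule: infinite_finite_induct) (auto simp: scaleC_add_left)

lemma scaleC_power: "(scaleC c a) ^ n = scaleC (c ^ n) (a ^ n)"
  by (induct n) (auto simp: scaleC_one mult_scaleC_left mult_scaleC_right scaleC_scaleC mult.commute)

lemma cstar_one: "cstar 1 = 1"
  using cstar_mult[of "cstar 1" 1] by (simp add: cstar_cstar)

lemma cstar_diff: "cstar (a - b) = cstar a - cstar b"
proof -
  have "cstar (a - b) + cstar b = cstar a"
    using cstar_add[of "a - b" b] by simp
  then show ?thesis by (simp add: eq_diff_eq)
qed

lemma cstar_scaleC_real_one: "cstar (scaleC (complex_of_real r) 1) = scaleC (complex_of_real r) 1"
  by (simp add: cstar_scaleC cstar_one)

end

section \<open>Invertible elements and the Neumann series\<close>

definition invertible :: "'a::cstar_algebra \<Rightarrow> bool" where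
  "invertible a \<longleftrightarrow> (\<exists>b. b * a = 1 \<and> a * b = 1)"

definition cinv :: "'a::cstar_algebra \<Rightarrow> 'a" where
  "cinv a = (SOME b. b * a = 1 \<and> a * b = 1)"

lemma spectrum_iff: "z \<in> spectrum a \<longleftrightarrow> \<not> invertible (a - scaleC z 1)"
  by (simp add: spectrum_def invertible_def)

lemma cinv_left: "invertible a \<Longrightarrow> cinv a * a = 1"
  and cinv_right: "invertible a \<Longrightarrow> a * cinv a = 1"
  using someI_ex[of "\<lambda>b. b * a = 1 \<and> a * b = 1"] by (auto simp: invertible_def cinv_def)

lemma cinv_eq:
  fixes a b :: "'a::cstar_algebra"
  assumes "b * a = 1" "a * b = 1"
  shows "cinv a = b"
proof -
  have inv: "invertible a" using assms invertible_def by blast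
  have "cinv a = cinv a * (a * b)" using assms by simp
  also have "\<dots> = b" by (simp add: mult.assoc[symmetric] cinv_left[OF inv])
  finally show ?thesis .
qed

lemma invertible_one: "invertible (1::'a::cstar_algebra)"
  by (auto simp: invertible_def)

lemma invertible_minus_iff: "invertible (- a) \<longleftrightarrow> invertible (a::'a::cstar_algebra)"
  unfolding invertible_def by (metis minus_minus minus_mult_minus)

lemma invertible_scaleC:
  fixes a :: "'a::cstar_algebra"
  assumes "c \<noteq> 0" "invertible a"
  shows "invertible (scaleC c a)"
proof -
  obtain b where "b * a = 1" "a * b = 1" using assms(2) invertible_def by blast
  then have "scaleC (1/c) b * scaleC c a = 1" "scaleC c a * scaleC (1/c) b = 1"
    using assms(1) by (simp_all add: mult_scaleC_left mult_scaleC_right scaleC_scaleC scaleC_one)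
  then show ?thesis unfolding invertible_def by blast
qed

lemma one_minus_mult_sum_powers:
  fixes x :: "'a::ring_1"
  shows "(1 - x) * (\<Sum>i<n. x ^ i) = 1 - x ^ n"
    and "(\<Sum>i<n. x ^ i) * (1 - x) = 1 - x ^ n"
proof -
  show "(1 - x) * (\<Sum>i<n. x ^ i) = 1 - x ^ n"
  proof (induct n)
    case (Suc n)
    have "(1 - x) * (\<Sum>i<Suc n. x ^ i) = (1 - x) * (\<Sum>i<n. x ^ i) + (1 - x) * x ^ n"
      by (simp add: distrib_left)
    also have "\<dots> = 1 - x ^ Suc n" using Suc by (simp add: algebra_simps)
    finally show ?case .
  qed simp
  show "(\<Sum>i<n. x ^ i) * (1 - x) = 1 - x ^ n"
  proof (induct n)
    case (Suc n)
    have "(\<Sum>i<Suc n. x ^ i) * (1 - x) = (\<Sum>i<n. x ^ i) * (1 - x) + x ^ n * (1 - x)"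
      by (simp add: distrib_right)
    also have "\<dots> = 1 - x ^ Suc n" using Suc by (simp add: algebra_simps power_commutes)
    finally show ?case .
  qed simp
qed

lemma invertible_one_minus:
  fixes e :: "'a::cstar_algebra"
  assumes "norm e < 1"
  shows "invertible (1 - e)"
proof -
  have "summable (\<lambda>n. norm (e ^ n))"
    by (rule summable_comparison_test'[OF summable_geometric[of "norm e"], of 0])
       (use assms norm_power_ineq in auto)
  then have partial_sums: "(\<lambda>n. \<Sum>i<n. e ^ i) \<longlonglongrightarrow> (\<Sum>n. e ^ n)"
    by (rule summable_LIMSEQ[OF summable_norm_cancel])
  have "(\<lambda>n. e ^ n) \<longlonglongrightarrow> 0"
    by (rule Lim_null_comparison[where g="\<lambda>n. norm e ^ n"])
       (use assms norm_power_ineq in \<open>auto intro!: LIMSEQ_power_zero always_eventually\<close>)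
  then have to_one: "(\<lambda>n. 1 - e ^ n) \<longlonglongrightarrow> 1"
    using tendsto_diff[OF tendsto_const[of 1], of "\<lambda>n. e ^ n" 0] by simp
  have "(\<lambda>n. (1 - e) * (\<Sum>i<n. e ^ i)) \<longlonglongrightarrow> (1 - e) * (\<Sum>n. e ^ n)"
    by (rule tendsto_mult_left[OF partial_sums])
  then have "(1 - e) * (\<Sum>n. e ^ n) = 1"
    using to_one by (simp add: one_minus_mult_sum_powers LIMSEQ_unique)
  moreover have "(\<lambda>n. (\<Sum>i<n. e ^ i) * (1 - e)) \<longlonglongrightarrow> (\<Sum>n. e ^ n) * (1 - e)"
    by (rule tendsto_mult_right[OF partial_sums])
  then have "(\<Sum>n. e ^ n) * (1 - e) = 1"
    using to_one by (simp add: one_minus_mult_sum_powers LIMSEQ_unique)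
  ultimately show ?thesis unfolding invertible_def by blast
qed

lemma invertible_scaleC_one_minus:
  fixes u :: "'a::cstar_algebra"
  assumes "norm u < cmod z"
  shows "invertible (scaleC z 1 - u)"
proof -
  have z: "z \<noteq> 0" using assms norm_ge_zero[of u] by auto
  have "norm (scaleC (1/z) u) < 1"
    using assms z by (simp add: norm_scaleC norm_divide divide_simps)
  then have "invertible (scaleC z (1 - scaleC (1/z) u))"
    by (intro invertible_scaleC[OF z] invertible_one_minus)
  moreover have "scaleC z (1 - scaleC (1/z) u) = scaleC z 1 - u"
    using z by (simp add: scaleC_diff_right scaleC_scaleC scaleC_one)
  ultimately show ?thesis by simp
qed

lemma norm_ge_spectrum:
  fixes a :: "'a::cstar_algebra"
  assumes "z \<in> spectrum a"
  shows "cmod z \<le> norm a"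
proof (rule ccontr)
  assume "\<not> cmod z \<le> norm a"
  then have "invertible (scaleC z 1 - a)"
    by (simp add: invertible_scaleC_one_minus)
  then have "invertible (- (scaleC z 1 - a))"
    by (simp only: invertible_minus_iff)
  then show False using assms by (simp add: spectrum_iff)
qed

lemma norm_cinv_diff_small_le:
  fixes a b e :: "'a::cstar_algebra"
  assumes ba: "b * a = 1" and ab: "a * b = 1" and small: "norm b * norm e < 1"
  shows "norm (cinv (a - e) - b) \<le> norm b ^ 2 * norm e / (1 - norm b * norm e)"
proof -
  define t where "t = norm b * norm e"
  have t: "0 \<le> t" "t < 1" using small by (auto simp: t_def)
  have "norm (b * e) < 1" using norm_mult_ineq[of b e] small by linarith
  then have inv: "invertible (1 - b * e)" by (rule invertible_one_minus)
  define c where "c = cinv (1 - b * e)"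
  have c1: "c * (1 - b * e) = 1" and c2: "(1 - b * e) * c = 1"
    using cinv_left[OF inv] cinv_right[OF inv] by (auto simp: c_def)
  have factor: "a - e = a * (1 - b * e)"
    by (simp add: algebra_simps mult.assoc[symmetric] ab)
  have left: "(c * b) * (a - e) = 1"
    unfolding factor by (simp add: mult.assoc[symmetric]) (simp add: mult.assoc ba c1)
  have "(1 - b * e) * (c * b) = b" by (simp add: mult.assoc[symmetric] c2)
  then have right: "(a - e) * (c * b) = 1"
    unfolding factor by (simp add: mult.assoc ab)
  have c_eq: "c = 1 + c * (b * e)" using c1 by (simp add: algebra_simps)
  have "norm c \<le> 1 + norm c * norm (b * e)"
    using norm_triangle_ineq[of 1 "c * (b * e)"] norm_mult_ineq[of c "b * e"] c_eq by simp
  also have "\<dots> \<le> 1 + norm c * t"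
    unfolding t_def by (intro add_left_mono mult_left_mono norm_mult_ineq) simp
  finally have norm_c: "norm c \<le> 1 / (1 - t)" using t by (simp add: divide_simps algebra_simps)
  have "c * b - b = (c - 1) * b" by (simp add: algebra_simps)
  also have "\<dots> = c * b * e * b"
    using arg_cong[OF c_eq, of "\<lambda>t. t - 1"] by (simp add: mult.assoc)
  finally have "norm (c * b - b) = norm (c * b * e * b)" by simp
  also have "\<dots> \<le> norm (c * b * e) * norm b" by (rule norm_mult_ineq)
  also have "\<dots> \<le> norm (c * b) * norm e * norm b"
    by (intro mult_right_mono norm_mult_ineq) simp
  also have "\<dots> \<le> norm c * norm b * norm e * norm b"
    by (intro mult_right_mono norm_mult_ineq) simp_all
  also have "\<dots> = norm c * (norm b ^ 2 * norm e)" by (simp add: power2_eq_square)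
  also have "\<dots> \<le> 1 / (1 - t) * (norm b ^ 2 * norm e)"
    using norm_c by (intro mult_right_mono) simp_all
  finally show ?thesis
    using cinv_eq[OF left right] by (simp add: t_def)
qed

lemma continuous_on_cinv_one_minus_scaleC:
  fixes x :: "'a::cstar_algebra"
  assumes "\<forall>\<mu>\<in>S. invertible (1 - scaleC \<mu> x)"
  shows "continuous_on S (\<lambda>\<mu>. cinv (1 - scaleC \<mu> x))"
  unfolding continuous_on_def
proof
  fix \<mu>0 assume "\<mu>0 \<in> S"
  define a where "a = 1 - scaleC \<mu>0 x"
  define b where "b = cinv a"
  have ba: "b * a = 1" and ab: "a * b = 1"
    using cinv_left[of a] cinv_right[of a] assms \<open>\<mu>0 \<in> S\<close> by (auto simp: a_def b_def)
  define E where "E = (\<lambda>\<mu>. norm (scaleC (\<mu> - \<mu>0) x))"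
  have shift: "1 - scaleC \<mu> x = a - scaleC (\<mu> - \<mu>0) x" for \<mu>
    by (simp add: a_def scaleC_diff_left)
  have "((\<lambda>\<mu>. cmod (\<mu> - \<mu>0) * norm x) \<longlongrightarrow> 0 * norm x) (at \<mu>0 within S)"
    by (intro tendsto_intros tendsto_norm_zero LIM_zero tendsto_ident_at)
  then have E: "(E \<longlongrightarrow> 0) (at \<mu>0 within S)"
    by (simp add: E_def norm_scaleC)
  then have bE: "((\<lambda>\<mu>. norm b * E \<mu>) \<longlongrightarrow> 0) (at \<mu>0 within S)"
    using tendsto_mult_right_zero by blast
  then have small: "\<forall>\<^sub>F \<mu> in at \<mu>0 within S. norm b * E \<mu> < 1"
    using order_tendstoD(2) zero_less_one by blast
  have bound: "((\<lambda>\<mu>. norm b ^ 2 * E \<mu> / (1 - norm b * E \<mu>)) \<longlongrightarrow> 0) (at \<mu>0 within S)"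
    using tendsto_divide[OF tendsto_mult_right_zero[OF E] tendsto_diff[OF tendsto_const bE]] by simp
  have "((\<lambda>\<mu>. cinv (1 - scaleC \<mu> x) - b) \<longlongrightarrow> 0) (at \<mu>0 within S)"
  proof (rule Lim_null_comparison[OF _ bound])
    show "\<forall>\<^sub>F \<mu> in at \<mu>0 within S.
        norm (cinv (1 - scaleC \<mu> x) - b) \<le> norm b ^ 2 * E \<mu> / (1 - norm b * E \<mu>)"
      using small by eventually_elim (simp add: shift E_def norm_cinv_diff_small_le[OF ba ab])
  qed
  then show "((\<lambda>\<mu>. cinv (1 - scaleC \<mu> x)) \<longlongrightarrow> cinv (1 - scaleC \<mu>0 x)) (at \<mu>0 within S)"
    by (simp add: LIM_zero_iff b_def a_def)
qed

section \<open>Powers with invertible resolvents on the unit disc tend to zero\<close>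

definition unity_root :: "nat \<Rightarrow> nat \<Rightarrow> complex" where
  "unity_root n m = exp (2 * of_real pi * \<i> * of_nat m / of_nat n)"

lemma unity_root_power: "unity_root n m ^ p = unity_root n (m * p)"
  unfolding unity_root_def exp_of_nat_mult[symmetric] by (simp add: algebra_simps)

lemma norm_unity_root [simp]: "cmod (unity_root n m) = 1"
  unfolding unity_root_def by simp

lemma unity_root_power_self: "n \<noteq> 0 \<Longrightarrow> unity_root n m ^ n = 1"
  unfolding unity_root_def by (rule complex_root_unity)

lemma sum_unity_root_powers:
  assumes "j < n"
  shows "(\<Sum>k<n. unity_root n k ^ j) = (if j = 0 then of_nat n else 0)"
proof (cases "j = 0")
  case False
  have "unity_root n j \<noteq> 1"
    using complex_root_unity_eq_1[of n j] assms False unfolding unity_root_def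
    by (auto dest: dvd_imp_le)
  then have "(\<Sum>k<n. unity_root n j ^ k) = (unity_root n j ^ n - 1) / (unity_root n j - 1)"
    by (rule geometric_sum)
  also have "\<dots> = 0" using unity_root_power_self[of n j] assms by simp
  finally show ?thesis using False by (simp add: unity_root_power mult.commute)
qed simp

lemma sum_unity_root_geometric_sums:
  fixes y :: "'a::cstar_algebra"
  assumes "n \<ge> 1"
  shows "(\<Sum>k<n. \<Sum>j<n. (scaleC (unity_root n k) y) ^ j) = scaleC (of_nat n) 1"
proof -
  have "(\<Sum>k<n. \<Sum>j<n. (scaleC (unity_root n k) y) ^ j)
      = (\<Sum>k<n. \<Sum>j<n. scaleC (unity_root n k ^ j) (y ^ j))"
    by (simp add: scaleC_power)
  also have "\<dots> = (\<Sum>j<n. \<Sum>k<n. scaleC (unity_root n k ^ j) (y ^ j))"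
    by (rule sum.swap)
  also have "\<dots> = (\<Sum>j<n. scaleC (\<Sum>k<n. unity_root n k ^ j) (y ^ j))"
    by (simp add: scaleC_sum_left)
  also have "\<dots> = (\<Sum>j<n. if j = 0 then scaleC (of_nat n) 1 else 0)"
    by (rule sum.cong) (simp_all add: sum_unity_root_powers)
  finally show ?thesis using assms by (simp add: sum.delta)
qed

text \<open>
  Each \<open>(1 - \<omega>y)\<inverse>\<^sup>1 (1 - y\<^sup>n)\<close> is the geometric sum \<open>\<Sum>\<^sub>j\<^sub><\<^sub>n (\<omega>y)\<^sup>j\<close>, and summing over the
  \<open>n\<close>-th roots of unity \<open>\<omega>\<close> cancels every term with \<open>0 < j < n\<close>.
\<close>
lemma average_cinv_one_minus_unity_root:
  fixes y :: "'a::cstar_algebra"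
  assumes n: "n \<ge> 1" and inv: "\<forall>k<n. invertible (1 - scaleC (unity_root n k) y)"
  defines "w \<equiv> scaleC (1 / of_nat n) (\<Sum>k<n. cinv (1 - scaleC (unity_root n k) y))"
  shows "w * (1 - y ^ n) = 1" and "(1 - y ^ n) * w = 1"
proof -
  define S where "S k = (\<Sum>j<n. (scaleC (unity_root n k) y) ^ j)" for k
  have power_n: "(scaleC (unity_root n k) y) ^ n = y ^ n" for k
    using n by (simp add: scaleC_power unity_root_power_self scaleC_one)
  have left: "cinv (1 - scaleC (unity_root n k) y) * (1 - y ^ n) = S k" if "k < n" for k
  proof -
    have "1 - y ^ n = (1 - scaleC (unity_root n k) y) * S k"
      unfolding S_def one_minus_mult_sum_powers power_n ..
    then have "cinv (1 - scaleC (unity_root n k) y) * (1 - y ^ n)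
        = (cinv (1 - scaleC (unity_root n k) y) * (1 - scaleC (unity_root n k) y)) * S k"
      by (simp add: mult.assoc)
    then show ?thesis using cinv_left[of "1 - scaleC (unity_root n k) y"] inv that by simp
  qed
  have right: "(1 - y ^ n) * cinv (1 - scaleC (unity_root n k) y) = S k" if "k < n" for k
  proof -
    have "1 - y ^ n = S k * (1 - scaleC (unity_root n k) y)"
      unfolding S_def one_minus_mult_sum_powers power_n ..
    then have "(1 - y ^ n) * cinv (1 - scaleC (unity_root n k) y)
        = S k * ((1 - scaleC (unity_root n k) y) * cinv (1 - scaleC (unity_root n k) y))"
      by (simp add: mult.assoc)
    then show ?thesis using cinv_right[of "1 - scaleC (unity_root n k) y"] inv that by simp
  qed
  have "(\<Sum>k<n. S k) = scaleC (of_nat n) 1"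
    unfolding S_def by (rule sum_unity_root_geometric_sums[OF n])
  moreover have "scaleC (1 / of_nat n) (scaleC (of_nat n) 1) = (1::'a)"
    using n by (simp add: scaleC_scaleC scaleC_one)
  ultimately show "w * (1 - y ^ n) = 1" "(1 - y ^ n) * w = 1"
    by (simp_all add: w_def mult_scaleC_left mult_scaleC_right sum_distrib_right sum_distrib_left
        left right)
qed

lemma norm_le_if_one_minus_mult_one_minus_eq_one:
  fixes u z :: "'a::real_normed_algebra_1"
  assumes "(1 - u) * (1 - z) = 1" and "norm z < 1"
  shows "norm u \<le> norm z / (1 - norm z)"
proof -
  have "u = u * z - z" using assms(1) by (simp add: algebra_simps)
  then have "norm u \<le> norm (u * z) + norm z"
    by (metis norm_triangle_ineq4)
  also have "\<dots> \<le> norm u * norm z + norm z"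
    by (simp add: norm_mult_ineq)
  finally have "norm u * (1 - norm z) \<le> norm z" by (simp add: algebra_simps)
  then show ?thesis using assms(2) by (simp add: pos_le_divide_eq)
qed

lemma powers_tendsto_zero_if_norm_power_less_1:
  fixes y :: "'a::real_normed_algebra_1"
  assumes N: "N \<ge> 1" and less_1: "norm (y ^ N) < 1"
  shows "(\<lambda>n. y ^ n) \<longlonglongrightarrow> 0"
proof (rule Lim_null_comparison)
  define t where "t = norm (y ^ N)"
  define B where "B = max 1 (norm y) ^ N"
  show "\<forall>\<^sub>F n in sequentially. norm (y ^ n) \<le> B * t ^ (n div N)"
  proof (rule always_eventually, rule allI)
    fix n
    have "y ^ n = (y ^ N) ^ (n div N) * y ^ (n mod N)"
      by (subst div_mult_mod_eq[of n N, symmetric]) (simp only: power_add power_mult mult.commute)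
    then have "norm (y ^ n) \<le> norm ((y ^ N) ^ (n div N)) * norm (y ^ (n mod N))"
      by (simp add: norm_mult_ineq)
    also have "\<dots> \<le> t ^ (n div N) * norm y ^ (n mod N)"
      unfolding t_def by (intro mult_mono norm_power_ineq) auto
    also have "\<dots> \<le> t ^ (n div N) * B"
    proof (intro mult_left_mono)
      have "norm y ^ (n mod N) \<le> max 1 (norm y) ^ (n mod N)" by (intro power_mono) auto
      also have "\<dots> \<le> B" unfolding B_def using N by (intro power_increasing) auto
      finally show "norm y ^ (n mod N) \<le> B" .
    qed (simp add: t_def)
    finally show "norm (y ^ n) \<le> B * t ^ (n div N)" by (simp add: mult.commute)
  qed
  have "(\<lambda>n. t ^ (n div N)) \<longlonglongrightarrow> 0"
    by (rule filterlim_compose[OF LIMSEQ_power_zero filterlim_at_top_div_const_nat])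
       (use less_1 N in \<open>auto simp: t_def\<close>)
  then show "(\<lambda>n. B * t ^ (n div N)) \<longlonglongrightarrow> 0"
    by (rule tendsto_mult_right_zero)
qed

lemma norm_power_less_1_if_close_resolvents:
  fixes y y' :: "'a::cstar_algebra"
  assumes n: "n \<ge> 1"
    and inv: "\<forall>k<n. invertible (1 - scaleC (unity_root n k) y)"
      "\<forall>k<n. invertible (1 - scaleC (unity_root n k) y')"
    and small: "norm (y ^ n) < 1/9"
    and close: "\<forall>k<n. norm (cinv (1 - scaleC (unity_root n k) y)
                           - cinv (1 - scaleC (unity_root n k) y')) \<le> 1/8"
  shows "norm (y' ^ n) < 1"
proof -
  define avg where "avg v = scaleC (1 / of_nat n) (\<Sum>k<n. cinv (1 - scaleC (unity_root n k) v))"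
    for v :: 'a
  have "(1 - (1 - avg y)) * (1 - y ^ n) = 1"
    using average_cinv_one_minus_unity_root(1)[OF n inv(1)] by (simp add: avg_def)
  then have "norm (1 - avg y) \<le> norm (y ^ n) / (1 - norm (y ^ n))"
    using small by (intro norm_le_if_one_minus_mult_one_minus_eq_one) simp_all
  also have "\<dots> \<le> 1/8" using small by (simp add: divide_simps)
  finally have near_y: "norm (1 - avg y) \<le> 1/8" .
  have "norm (avg y - avg y') = (1 / real n) *
      norm (\<Sum>k<n. cinv (1 - scaleC (unity_root n k) y) - cinv (1 - scaleC (unity_root n k) y'))"
    by (simp add: avg_def scaleC_diff_right[symmetric] sum_subtractf norm_scaleC norm_divide)
  also have "\<dots> \<le> (1 / real n) * (\<Sum>k<n. 1/8)"
    using close by (intro mult_left_mono order.trans[OF norm_sum] sum_mono) auto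
  also have "\<dots> = 1/8" using n by simp
  finally have "norm (avg y - avg y') \<le> 1/8" .
  then have near_y': "norm (1 - avg y') \<le> 1/4"
    using near_y norm_triangle_ineq[of "1 - avg y" "avg y - avg y'"] by simp
  have "(1 - y' ^ n) * (1 - (1 - avg y')) = 1"
    using average_cinv_one_minus_unity_root(2)[OF n inv(2)] by (simp add: avg_def)
  then have "norm (y' ^ n) \<le> norm (1 - avg y') / (1 - norm (1 - avg y'))"
    using near_y' by (intro norm_le_if_one_minus_mult_one_minus_eq_one) simp_all
  also have "\<dots> < 1" using near_y' by (simp add: divide_simps)
  finally show ?thesis .
qed

lemma norm_power_less_1_propagates:
  fixes x :: "'a::cstar_algebra"
  assumes inv: "\<forall>\<mu>. cmod \<mu> \<le> 1 \<longrightarrow> invertible (1 - scaleC \<mu> x)"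
    and uniform: "\<forall>\<mu>\<in>cball 0 1. \<forall>\<mu>'\<in>cball 0 1. dist \<mu>' \<mu> < \<delta> \<longrightarrow>
                    dist (cinv (1 - scaleC \<mu>' x)) (cinv (1 - scaleC \<mu> x)) < 1/8"
    and r: "r \<in> {0..1}" "r' \<in> {0..1}" "\<bar>r - r'\<bar> < \<delta>"
    and N: "N \<ge> 1" "norm ((scaleC (complex_of_real r) x) ^ N) < 1"
  shows "\<exists>n\<ge>1. norm ((scaleC (complex_of_real r') x) ^ n) < 1"
proof -
  have rotate: "scaleC (unity_root n k) (scaleC (complex_of_real s) x)
      = scaleC (unity_root n k * complex_of_real s) x" for n k s
    by (simp add: scaleC_scaleC)
  have in_disc: "unity_root n k * complex_of_real s \<in> cball 0 1" if "s \<in> {0..1}" for n k s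
    using that by (simp add: norm_mult)
  have "(\<lambda>n. norm ((scaleC (complex_of_real r) x) ^ n)) \<longlonglongrightarrow> 0"
    using N by (intro tendsto_norm_zero powers_tendsto_zero_if_norm_power_less_1)
  then obtain M where M: "\<forall>n\<ge>M. norm ((scaleC (complex_of_real r) x) ^ n) < 1/9"
    using order_tendstoD(2)[of _ 0 sequentially "1/9"] by (force simp: eventually_sequentially)
  define n where "n = max M 1"
  have n: "n \<ge> 1" "norm ((scaleC (complex_of_real r) x) ^ n) < 1/9"
    using M by (auto simp: n_def)
  have "norm ((scaleC (complex_of_real r') x) ^ n) < 1"
  proof (rule norm_power_less_1_if_close_resolvents[OF n(1) _ _ n(2)])
    have inv_scaled: "\<forall>k<n. invertible (1 - scaleC (unity_root n k) (scaleC (complex_of_real s) x))"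
      if "s \<in> {0..1}" for s
      using inv in_disc[OF that] by (simp add: rotate)
    show "\<forall>k<n. invertible (1 - scaleC (unity_root n k) (scaleC (complex_of_real r) x))"
      "\<forall>k<n. invertible (1 - scaleC (unity_root n k) (scaleC (complex_of_real r') x))"
      using inv_scaled r by blast+
    have "dist (unity_root n k * complex_of_real r) (unity_root n k * complex_of_real r')
        = \<bar>r - r'\<bar>" for k
      by (simp add: dist_norm norm_mult right_diff_distrib[symmetric] of_real_diff[symmetric]
          del: of_real_diff)
    then show "\<forall>k<n. norm (cinv (1 - scaleC (unity_root n k) (scaleC (complex_of_real r) x))
        - cinv (1 - scaleC (unity_root n k) (scaleC (complex_of_real r') x))) \<le> 1/8"
      using uniform in_disc r by (simp add: rotate dist_norm less_imp_le)
  qed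
  then show ?thesis using n(1) by blast
qed

text \<open>
  With \<open>\<delta>\<close> from the uniform continuity of \<open>\<mu> \<mapsto> (1 - \<mu>x)\<inverse>\<^sup>1\<close> on the closed disc, the
  previous lemma moves the property \<open>\<exists>N \<ge> 1. \<parallel>(rx)\<^sup>N\<parallel> < 1\<close> in steps of \<open>\<delta>/2\<close> from the
  trivial case \<open>r = 0\<close> to \<open>r = 1\<close>.
\<close>
lemma powers_tendsto_zero_if_invertible_on_disc:
  fixes x :: "'a::cstar_algebra"
  assumes inv: "\<forall>\<mu>. cmod \<mu> \<le> 1 \<longrightarrow> invertible (1 - scaleC \<mu> x)"
  shows "(\<lambda>n. x ^ n) \<longlonglongrightarrow> 0"
proof -
  have "uniformly_continuous_on (cball 0 1) (\<lambda>\<mu>. cinv (1 - scaleC \<mu> x))"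
    using inv by (intro compact_uniformly_continuous continuous_on_cinv_one_minus_scaleC) auto
  moreover have "(1/8::real) > 0" by simp
  ultimately obtain \<delta> where \<delta>: "\<delta> > 0" and uniform:
    "\<forall>\<mu>\<in>cball 0 1. \<forall>\<mu>'\<in>cball 0 1. dist \<mu>' \<mu> < \<delta> \<longrightarrow>
       dist (cinv (1 - scaleC \<mu>' x)) (cinv (1 - scaleC \<mu> x)) < 1/8"
    unfolding uniformly_continuous_on_def by blast
  define P where "P r \<longleftrightarrow> (\<exists>N\<ge>1. norm ((scaleC (complex_of_real r) x) ^ N) < 1)" for r
  have step: "P r'" if "P r" "r \<in> {0..1}" "r' \<in> {0..1}" "\<bar>r - r'\<bar> < \<delta>" for r r'
    using that norm_power_less_1_propagates[OF inv uniform] unfolding P_def by blast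
  have "P (min 1 (real m * \<delta> / 2))" for m
  proof (induct m)
    case 0
    show ?case unfolding P_def by (intro exI[of _ 1]) simp
  next
    case (Suc m)
    have "\<bar>min 1 (real m * \<delta> / 2) - min 1 (real (Suc m) * \<delta> / 2)\<bar> < \<delta>"
      using \<delta> by (auto simp: min_def algebra_simps)
    then show ?case using \<delta> by (intro step[OF Suc]) auto
  qed
  moreover obtain m where "2 / \<delta> < real m" using reals_Archimedean2 by blast
  then have "min 1 (real m * \<delta> / 2) = 1" using \<delta> by (simp add: field_simps)
  ultimately have "P 1" by metis
  then obtain N where "N \<ge> 1" "norm (x ^ N) < 1"
    by (auto simp: P_def scaleC_one)
  then show ?thesis by (rule powers_tendsto_zero_if_norm_power_less_1)
qed

section \<open>The norm is monotone on positive elements\<close>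

lemma selfadjoint_power_two_power:
  fixes h :: "'a::cstar_algebra"
  assumes "cstar h = h"
  shows "cstar (h ^ 2 ^ k) = h ^ 2 ^ k \<and> norm (h ^ 2 ^ k) = norm h ^ 2 ^ k"
proof (induct k)
  case (Suc k)
  have square: "h ^ 2 ^ Suc k = h ^ 2 ^ k * h ^ 2 ^ k"
    by (simp add: power_add[symmetric] mult_2)
  have "cstar (h ^ 2 ^ Suc k) = h ^ 2 ^ Suc k"
    unfolding square using Suc by (simp add: cstar_mult)
  moreover have "norm (h ^ 2 ^ Suc k) = norm h ^ 2 ^ Suc k"
    using cstar_identity[of "h ^ 2 ^ k"] Suc unfolding square
    by (simp add: power_add[symmetric] mult_2)
  ultimately show ?case ..
qed (use assms in simp)

lemma norm_less_if_scaled_powers_tendsto_zero: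
  fixes h :: "'a::cstar_algebra"
  assumes "cstar h = h" and "\<rho> > 0" and "(\<lambda>n. (scaleC (complex_of_real (1 / \<rho>)) h) ^ n) \<longlonglongrightarrow> 0"
  shows "norm h < \<rho>"
proof -
  from order_tendstoD(2)[OF tendsto_norm_zero[OF assms(3)], of 1]
  obtain N where "\<forall>n\<ge>N. norm ((scaleC (complex_of_real (1 / \<rho>)) h) ^ n) < 1"
    by (auto simp: eventually_sequentially)
  moreover have "N \<le> 2 ^ N" by (simp add: less_imp_le less_exp)
  ultimately have "norm ((scaleC (complex_of_real (1 / \<rho>)) h) ^ 2 ^ N) < 1" by blast
  moreover have "norm ((scaleC (complex_of_real (1 / \<rho>)) h) ^ 2 ^ N) = norm h ^ 2 ^ N / \<rho> ^ 2 ^ N"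
    using selfadjoint_power_two_power[OF assms(1), of N] assms(2)
    by (simp add: scaleC_power norm_scaleC norm_power norm_divide power_one_over)
  ultimately have "norm h ^ 2 ^ N < \<rho> ^ 2 ^ N"
    using assms(2) by (simp add: pos_divide_less_eq)
  then show ?thesis using assms(2) by (simp add: power_less_imp_less_base)
qed

lemma invertible_one_minus_scaleC_if_spectrum_bounded:
  fixes h :: "'a::cstar_algebra"
  assumes "\<rho> > 0" and spectrum: "\<forall>z\<in>spectrum h. cmod z < \<rho>" and "cmod \<mu> \<le> 1"
  shows "invertible (1 - scaleC \<mu> (scaleC (complex_of_real (1 / \<rho>)) h))"
proof (cases "\<mu> = 0")
  case False
  have "\<rho> \<le> cmod (complex_of_real \<rho> / \<mu>)"
    using \<open>\<rho> > 0\<close> False assms(3) by (simp add: norm_divide divide_simps)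
  then have "complex_of_real \<rho> / \<mu> \<notin> spectrum h" using spectrum by force
  then have "invertible (scaleC (- (\<mu> / complex_of_real \<rho>)) (h - scaleC (complex_of_real \<rho> / \<mu>) 1))"
    using False \<open>\<rho> > 0\<close> by (intro invertible_scaleC) (simp_all add: spectrum_iff)
  also have "scaleC (- (\<mu> / complex_of_real \<rho>)) (h - scaleC (complex_of_real \<rho> / \<mu>) 1)
      = 1 - scaleC \<mu> (scaleC (complex_of_real (1 / \<rho>)) h)"
    using False \<open>\<rho> > 0\<close>
    by (simp add: scaleC_diff_right scaleC_scaleC scaleC_minus_left scaleC_one)
  finally show ?thesis .
qed (simp add: invertible_one)

lemma norm_le_if_spectrum_bounded:
  fixes h :: "'a::cstar_algebra"
  assumes "cstar h = h" and "0 \<le> m" and "\<forall>z\<in>spectrum h. cmod z \<le> m"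
  shows "norm h \<le> m"
proof (rule dense_ge)
  fix \<rho> assume "m < \<rho>"
  then have "\<forall>\<mu>. cmod \<mu> \<le> 1 \<longrightarrow> invertible (1 - scaleC \<mu> (scaleC (complex_of_real (1 / \<rho>)) h))"
    using assms by (intro allI impI invertible_one_minus_scaleC_if_spectrum_bounded) force+
  then have "norm h < \<rho>"
    using \<open>m < \<rho>\<close> assms
    by (intro norm_less_if_scaled_powers_tendsto_zero powers_tendsto_zero_if_invertible_on_disc) auto
  then show "norm h \<le> \<rho>" by simp
qed

lemma norm_scaleC_norm_minus_positive_le:
  fixes c :: "'a::cstar_algebra"
  assumes "positive c"
  shows "norm (scaleC (complex_of_real (norm c)) 1 - c) \<le> norm c"
proof (rule norm_le_if_spectrum_bounded)
  show "cstar (scaleC (complex_of_real (norm c)) 1 - c) = scaleC (complex_of_real (norm c)) 1 - c"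
    using assms by (simp add: positive_def cstar_diff cstar_scaleC_real_one)
  show "\<forall>z\<in>spectrum (scaleC (complex_of_real (norm c)) 1 - c). cmod z \<le> norm c"
  proof
    fix z assume "z \<in> spectrum (scaleC (complex_of_real (norm c)) 1 - c)"
    then have "\<not> invertible (scaleC (complex_of_real (norm c) - z) 1 - c)"
      by (simp add: spectrum_iff scaleC_diff_left algebra_simps)
    then have w: "complex_of_real (norm c) - z \<in> spectrum c"
      by (metis minus_diff_eq invertible_minus_iff spectrum_iff)
    then have "Im z = 0" "Re z \<le> norm c" "cmod (complex_of_real (norm c) - z) \<le> norm c"
      using assms norm_ge_spectrum[OF w] by (auto simp: positive_def)
    moreover have "Re (complex_of_real (norm c) - z) \<le> cmod (complex_of_real (norm c) - z)"
      by (rule complex_Re_le_cmod)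
    ultimately show "cmod z \<le> norm c"
      by (simp add: cmod_eq_Re abs_le_iff)
  qed
qed simp

text \<open>
  A spectral value \<open>z > \<parallel>b\<parallel>\<close> of \<open>a\<close> is excluded by writing, with \<open>c = b - a\<close>,
  \<open>z - a = (z + \<parallel>c\<parallel>) - (b + (\<parallel>c\<parallel> - c))\<close> and applying the Neumann series.
\<close>
lemma norm_mono_positive:
  fixes a b :: "'a::cstar_algebra"
  assumes "positive a" and "cleq a b"
  shows "norm a \<le> norm b"
proof (rule norm_le_if_spectrum_bounded)
  show "cstar a = a" using assms(1) by (simp add: positive_def)
  show "\<forall>z\<in>spectrum a. cmod z \<le> norm b"
  proof (rule ccontr)
    assume "\<not> (\<forall>z\<in>spectrum a. cmod z \<le> norm b)"
    then obtain z where z: "z \<in> spectrum a" "norm b < cmod z" by auto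
    define c where "c = b - a"
    define v where "v = scaleC (complex_of_real (norm c)) 1 - c"
    have "Im z = 0" "0 \<le> Re z" using z(1) assms(1) by (auto simp: positive_def)
    then have z_real: "z = complex_of_real (Re z)" "cmod z = Re z"
      by (auto simp: complex_eq_iff cmod_eq_Re)
    have "norm (b + v) \<le> norm b + norm c"
      using norm_triangle_ineq[of b v] norm_scaleC_norm_minus_positive_le[of c] assms(2)
      by (simp add: v_def c_def cleq_def)
    also have "\<dots> < Re z + norm c" using z(2) z_real(2) by simp
    also have "\<dots> = cmod (complex_of_real (Re z + norm c))"
      using \<open>0 \<le> Re z\<close> by (simp only: norm_of_real) simp
    finally have "invertible (scaleC (complex_of_real (Re z + norm c)) 1 - (b + v))"
      by (rule invertible_scaleC_one_minus)
    also have "scaleC (complex_of_real (Re z + norm c)) 1 - (b + v) = scaleC z 1 - a"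
      by (subst z_real(1)) (simp add: v_def c_def scaleC_add_left algebra_simps)
    finally show False
      using z(1) by (metis minus_diff_eq invertible_minus_iff spectrum_iff)
  qed
qed simp

section \<open>Orbits in C*-algebra valued metric spaces\<close>

lemma funpow_fixpoint: "f x = x \<Longrightarrow> (f ^^ n) x = x"
  by (induct n) auto

context
  fixes d :: "'x \<Rightarrow> 'x \<Rightarrow> 'a::cstar_algebra"
  assumes metric: "cstar_metric d"
begin

lemma norm_dist_triangle: "norm (d x y) \<le> norm (d x z) + norm (d z y)"
proof -
  have "norm (d x y) \<le> norm (d x z + d z y)"
    using metric unfolding cstar_metric_def by (intro norm_mono_positive) blast+
  then show ?thesis using norm_triangle_ineq[of "d x z" "d z y"] by linarith
qed

lemma norm_dist_commute: "norm (d x y) = norm (d y x)"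
  using metric by (simp add: cstar_metric_def)

lemma cdist_self: "d x x = 0"
  using metric by (simp add: cstar_metric_def)

lemma norm_dist_eq_0_iff: "norm (d x y) = 0 \<longleftrightarrow> x = y"
  using metric by (simp add: cstar_metric_def)

lemma cconverges_unique:
  assumes "cconverges d s u" and "cconverges d s v"
  shows "u = v"
proof -
  have "norm (d u v) \<le> norm (d (s n) u) + norm (d (s n) v)" for n
    using norm_dist_triangle[of u v "s n"] norm_dist_commute[of u "s n"] by simp
  moreover have "(\<lambda>n. norm (d (s n) u) + norm (d (s n) v)) \<longlonglongrightarrow> 0"
    using tendsto_add[OF assms[unfolded cconverges_def]] by simp
  ultimately have "norm (d u v) \<le> 0"
    by (intro tendsto_le[OF trivial_limit_sequentially] always_eventually tendsto_const) auto
  then show ?thesis using norm_dist_eq_0_iff[of u v] by simp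
qed

lemma ccauchy_if_geometric_steps:
  assumes "0 \<le> Q" "Q < 1" and steps: "\<And>n. norm (d (s n) (s (Suc n))) \<le> B * Q ^ n"
  shows "ccauchy d s"
proof -
  have B: "0 \<le> B" using order.trans[OF norm_ge_zero steps[of 0]] by simp
  have tail: "norm (d (s m) (s (m + k))) \<le> B * Q ^ m / (1 - Q)" for m k
  proof -
    have "norm (d (s m) (s (m + k))) \<le> (\<Sum>i<k. B * Q ^ (m + i))"
    proof (induct k)
      case (Suc k)
      then show ?case
        using norm_dist_triangle[of "s m" "s (m + Suc k)" "s (m + k)"] steps[of "m + k"] by simp
    qed (simp add: cdist_self)
    also have "\<dots> = B * Q ^ m * (\<Sum>i<k. Q ^ i)"
      by (simp add: power_add sum_distrib_left mult.assoc)
    also have "\<dots> \<le> B * Q ^ m * (1 / (1 - Q))"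
      using assms B sum_le_suminf[of "\<lambda>i. Q ^ i"] suminf_geometric[of Q]
      by (intro mult_left_mono) (auto intro: summable_geometric)
    finally show ?thesis by simp
  qed
  have "(\<lambda>m. B * Q ^ m / (1 - Q)) \<longlonglongrightarrow> 0"
    using assms by (intro tendsto_divide_zero tendsto_mult_right_zero LIMSEQ_power_zero) simp
  show ?thesis unfolding ccauchy_def
  proof (intro allI impI)
    fix e :: real assume "e > 0"
    then obtain N where N: "B * Q ^ N / (1 - Q) < e"
      using order_tendstoD(2)[OF \<open>(\<lambda>m. B * Q ^ m / (1 - Q)) \<longlonglongrightarrow> 0\<close>]
      by (auto simp: eventually_sequentially)
    have close: "norm (d (s n) (s m)) < e" if "N \<le> m" "m \<le> n" for m n
    proof -
      obtain k where "n = m + k" using le_Suc_ex[OF \<open>m \<le> n\<close>] by blast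
      then have "norm (d (s n) (s m)) \<le> B * Q ^ m / (1 - Q)"
        using tail[of m k] norm_dist_commute by simp
      also have "\<dots> \<le> B * Q ^ N / (1 - Q)"
        using assms B that by (intro divide_right_mono mult_left_mono power_decreasing) auto
      finally show ?thesis using N by simp
    qed
    show "\<exists>N. \<forall>m\<ge>N. \<forall>n\<ge>N. norm (d (s n) (s m)) < e"
    proof (intro exI allI impI)
      fix m n assume "N \<le> m" "N \<le> n"
      then show "norm (d (s n) (s m)) < e"
        using close[of m n] close[of n m] norm_dist_commute[of "s n" "s m"] by (cases "m \<le> n") auto
    qed
  qed
qed

lemma fixpoint_if_orbitally_continuous_at:
  assumes "orbitally_continuous_at d T u" and "cconverges d (\<lambda>n. (T ^^ n) x) u"
  shows "T u = u"
proof (rule cconverges_unique)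
  have "(\<lambda>i. norm (d ((T ^^ (id i + 1)) x) (T u))) \<longlonglongrightarrow> 0"
    using assms unfolding orbitally_continuous_at_def cconverges_def
    by (intro assms(1)[unfolded orbitally_continuous_at_def, rule_format, OF strict_mono_id]) simp
  then show "cconverges d (\<lambda>n. (T ^^ Suc n) x) (T u)"
    by (simp add: cconverges_def)
  show "cconverges d (\<lambda>n. (T ^^ Suc n) x) u"
    unfolding cconverges_def by (rule LIMSEQ_Suc[OF assms(2)[unfolded cconverges_def]])
qed

end

lemma ciric_type2_norm_bound:
  fixes d :: "'x \<Rightarrow> 'x \<Rightarrow> 'a::cstar_algebra"
  assumes "cstar_metric d" and "ciric_type2 d T"
  obtains \<kappa> C :: "'x \<Rightarrow> 'x \<Rightarrow> real"
  where "\<And>x y. 0 \<le> \<kappa> x y" "\<And>x y. \<kappa> x y < 1" "\<And>x y. 0 \<le> C x y"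
    and "\<And>x y n. n \<ge> 1 \<Longrightarrow> norm (d ((T ^^ n) x) ((T ^^ n) y)) \<le> \<kappa> x y ^ n * C x y"
proof -
  obtain q \<delta> :: "'x \<Rightarrow> 'x \<Rightarrow> 'a" where q: "\<And>x y. norm (q x y) < 1"
    and contr: "\<And>x y n. n \<ge> 1 \<Longrightarrow> cleq (d ((T ^^ n) x) ((T ^^ n) y)) (q x y ^ n * \<delta> x y)"
    using assms(2) unfolding ciric_type2_def by blast
  have "norm (d ((T ^^ n) x) ((T ^^ n) y)) \<le> norm (q x y) ^ n * norm (\<delta> x y)"
    if "n \<ge> 1" for x y n
  proof -
    have "norm (d ((T ^^ n) x) ((T ^^ n) y)) \<le> norm (q x y ^ n * \<delta> x y)"
      using assms(1) contr[OF that] by (intro norm_mono_positive) (simp_all add: cstar_metric_def)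
    also have "\<dots> \<le> norm (q x y) ^ n * norm (\<delta> x y)"
      by (intro order.trans[OF norm_mult_ineq] mult_right_mono norm_power_ineq) simp
    finally show ?thesis .
  qed
  then show ?thesis using q by (intro that[of "\<lambda>x y. norm (q x y)" "\<lambda>x y. norm (\<delta> x y)"]) auto
qed

context
  fixes d :: "'x \<Rightarrow> 'x \<Rightarrow> 'a::cstar_algebra" and T :: "'x \<Rightarrow> 'x" and \<kappa> C :: "'x \<Rightarrow> 'x \<Rightarrow> real"
  assumes metric: "cstar_metric d"
    and \<kappa>: "\<And>x y. 0 \<le> \<kappa> x y" "\<And>x y. \<kappa> x y < 1" and C: "\<And>x y. 0 \<le> C x y"
    and contraction: "\<And>x y n. n \<ge> 1 \<Longrightarrow> norm (d ((T ^^ n) x) ((T ^^ n) y)) \<le> \<kappa> x y ^ n * C x y"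
begin

lemma orbit_tendsto_fixpoint:
  assumes "T u = u"
  shows "(\<lambda>n. norm (d ((T ^^ n) x) u)) \<longlonglongrightarrow> 0"
proof (rule Lim_null_comparison)
  show "\<forall>\<^sub>F n in sequentially. norm (norm (d ((T ^^ n) x) u)) \<le> \<kappa> x u ^ n * C x u"
    using eventually_ge_at_top[of 1]
    by eventually_elim (use contraction[of _ x u] funpow_fixpoint[of T u, OF assms] in simp)
  show "(\<lambda>n. \<kappa> x u ^ n * C x u) \<longlonglongrightarrow> 0"
    using \<kappa> by (intro tendsto_mult_left_zero LIMSEQ_power_zero) (simp add: abs_of_nonneg)
qed

lemma fixpoint_unique:
  assumes "T u = u" and "T v = v"
  shows "u = v"
  using orbit_tendsto_fixpoint[OF assms(2), of u] funpow_fixpoint[of T u, OF assms(1)]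
    norm_dist_eq_0_iff[OF metric, of u v]
  by (simp add: LIMSEQ_const_iff)

lemma orbit_ccauchy: "ccauchy d (\<lambda>n. (T ^^ n) x)"
proof (rule ccauchy_if_geometric_steps[OF metric \<kappa>])
  show "norm (d ((T ^^ n) x) ((T ^^ Suc n) x))
      \<le> (norm (d x (T x)) + C x (T x)) * \<kappa> x (T x) ^ n" for n
  proof (cases "n = 0")
    case False
    then have "norm (d ((T ^^ n) x) ((T ^^ n) (T x))) \<le> \<kappa> x (T x) ^ n * C x (T x)"
      by (intro contraction) simp
    also have "\<dots> \<le> \<kappa> x (T x) ^ n * (norm (d x (T x)) + C x (T x))"
      using \<kappa> by (intro mult_left_mono) auto
    finally show ?thesis by (simp add: funpow_swap1 mult.commute)
  qed (use C in simp)
qed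

lemma orbitally_continuous_if_fixpoint:
  assumes "T u = u"
  shows "orbitally_continuous d T"
  unfolding orbitally_continuous_def orbitally_continuous_at_def
proof (intro allI impI)
  fix w x and ni :: "nat \<Rightarrow> nat"
  assume ni: "strict_mono ni" and "(\<lambda>i. norm (d ((T ^^ ni i) x) w)) \<longlonglongrightarrow> 0"
  moreover have "(\<lambda>i. norm (d ((T ^^ ni i) x) u)) \<longlonglongrightarrow> 0"
    using LIMSEQ_subseq_LIMSEQ[OF orbit_tendsto_fixpoint[OF assms] ni] by (simp add: o_def)
  ultimately have "w = u"
    using cconverges_unique[OF metric, of "\<lambda>i. (T ^^ ni i) x"] by (simp add: cconverges_def)
  moreover have "strict_mono (\<lambda>i. ni i + 1)" using ni by (simp add: strict_mono_def)
  ultimately show "(\<lambda>i. norm (d ((T ^^ (ni i + 1)) x) (T w))) \<longlonglongrightarrow> 0"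
    using LIMSEQ_subseq_LIMSEQ[OF orbit_tendsto_fixpoint[OF assms]] assms
    by (simp add: o_def del: funpow.simps)
qed

end

theorem theorem3p7:
  fixes d :: "'x \<Rightarrow> 'x \<Rightarrow> 'a::cstar_algebra" and T :: "'x \<Rightarrow> 'x"
  assumes "cstar_metric d"
    and "ccomplete d"
    and "ciric_type2 d T"
  shows "orbitally_continuous d T \<longleftrightarrow> (\<exists>!x. T x = x)"
proof -
  obtain \<kappa> C where bounds: "\<And>x y. 0 \<le> \<kappa> x y" "\<And>x y. \<kappa> x y < 1" "\<And>x y. 0 \<le> C x y"
    "\<And>x y n. n \<ge> 1 \<Longrightarrow> norm (d ((T ^^ n) x) ((T ^^ n) y)) \<le> \<kappa> x y ^ n * C x y"
    using ciric_type2_norm_bound[OF assms(1,3)] by blast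
  note unique = fixpoint_unique[OF assms(1) bounds]
  show ?thesis
  proof
    assume continuous: "orbitally_continuous d T"
    fix x :: 'x
    obtain u where "cconverges d (\<lambda>n. (T ^^ n) x) u"
      using assms(2) orbit_ccauchy[OF assms(1) bounds] unfolding ccomplete_def by blast
    then have "T u = u"
      using continuous fixpoint_if_orbitally_continuous_at[OF assms(1)]
      by (auto simp: orbitally_continuous_def)
    then show "\<exists>!x. T x = x" using unique by blast
  next
    assume "\<exists>!x. T x = x"
    then show "orbitally_continuous d T"
      using orbitally_continuous_if_fixpoint[OF assms(1) bounds] by blast
  qed
qed

end
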